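(* Let $X,W\in L^1$ and suppose $W$ has a continuous distribution. Then $u_\lambda^c(X;W)=0$ for every $\lambda\in(0,1]$ if and only if $\mathsf{E}(X\mid W)=0$ almost surely.
   Context: Let $(\Omega,\mathcal{F},\mathsf{P})$ be a probability space, $L^1=L^1(\mathsf{P})$, and $\mathcal{P}$ the set of probability measures on $\mathcal{F}$ absolutely continuous with respect to $\mathsf{P}$. For $\mathsf{Q}\in\mathcal{P}$, $\mathsf{E}_\mathsf{Q}X:=\mathsf{E}_\mathsf{Q}X^+-\mathsf{E}_\mathsf{Q}X^-$ with the convention $\infty-\infty=-\infty$. For $\lambda\in(0,1]$, let $\mathcal{D}_\lambda=\{\mathsf{Q}\in\mathcal{P}:d\mathsf{Q}/d\mathsf{P}\le\lambda^{-1}\}$ and $u_\lambda(X)=\inf_{\mathsf{Q}\in\mathcal{D}_\lambda}\mathsf{E}_\mathsf{Q}X$ (minus Tail V@R of order $\lambda$). The set of extreme measures of $W$ is $\mathcal{X}_{\mathcal{D}_\lambda}(W)=\{\mathsf{Q}\in\mathcal{D}_\lambda:\mathsf{E}_\mathsf{Q}W=u_\lambda(W)\in(-\infty,\infty)\}$, and the utility contribution is $u_\lambda^c(X;W)=\inf_{\mathsf{Q}\in\mathcal{X}_{\mathcal{D}_\lambda}(W)}\mathsf{E}_\mathsf{Q}X$. *)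

theory Defs
  imports "HOL-Probability.Probability"
begin

text \<open>Probability measures Q absolutely continuous w.r.t. P with density dQ/dP bounded by 1/lambda
  (P-a.e.). Every such Q is of the form density M f (Radon-Nikodym), so we parametrise by densities.\<close>
definition Dlam :: "'a measure \<Rightarrow> real \<Rightarrow> 'a measure set" where
  "Dlam M lam = {Q. \<exists>f. f \<in> borel_measurable M \<and> (\<forall>x\<in>space M. 0 \<le> f x)
       \<and> (AE x in M. f x \<le> 1 / lam)
       \<and> Q = density M (\<lambda>x. ennreal (f x)) \<and> prob_space Q}"

text \<open>E_Q X = E_Q X^+ - E_Q X^- with the convention infinity - infinity = -infinity.\<close>
definition EQ :: "'a measure \<Rightarrow> ('a \<Rightarrow> real) \<Rightarrow> ereal" where
  "EQ Q X = (let p = (\<integral>\<^sup>+ x. ennreal (X x) \<partial>Q); n = (\<integral>\<^sup>+ x. ennreal (- X x) \<partial>Q) in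
     if n = \<infinity> then - \<infinity> else enn2ereal p - enn2ereal n)"

definition u_lam :: "'a measure \<Rightarrow> real \<Rightarrow> ('a \<Rightarrow> real) \<Rightarrow> ereal" where
  "u_lam M lam X = (INF Q \<in> Dlam M lam. EQ Q X)"

definition extreme_measures :: "'a measure \<Rightarrow> real \<Rightarrow> ('a \<Rightarrow> real) \<Rightarrow> 'a measure set" where
  "extreme_measures M lam W =
     {Q \<in> Dlam M lam. EQ Q W = u_lam M lam W \<and> u_lam M lam W \<noteq> \<infinity> \<and> u_lam M lam W \<noteq> - \<infinity>}"

definition u_contrib :: "'a measure \<Rightarrow> real \<Rightarrow> ('a \<Rightarrow> real) \<Rightarrow> ('a \<Rightarrow> real) \<Rightarrow> ereal" where
  "u_contrib M lam X W = (INF Q \<in> extreme_measures M lam W. EQ Q X)"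

end

theory Submission
  imports Defs
begin

text \<open>
  For \<open>0 < \<lambda> < 1\<close> let \<open>q\<close> be a \<open>\<lambda>\<close>-quantile of \<open>W\<close>; it exists because \<open>W\<close> has no atoms.
  For every admissible density \<open>f\<close> the integrand \<open>(f - 1{W \<le> q}/\<lambda>) (W - q)\<close> is nonnegative,
  so \<open>1{W \<le> q}/\<lambda>\<close> minimises \<open>E[f W]\<close>, and since \<open>W \<noteq> q\<close> a.e. it is the a.e.-unique minimiser.
  Hence \<open>u\<^sup>c\<^sub>\<lambda>(X;W) = E[X; W \<le> q]/\<lambda>\<close>, while \<open>u\<^sup>c\<^sub>1(X;W) = E X\<close>. All \<open>u\<^sup>c\<^sub>\<lambda>\<close> therefore vanish
  iff \<open>E X = 0\<close> and \<open>E[X; W \<le> q] = 0\<close> for all \<open>q\<close>. The sets \<open>{W \<le> q}\<close> form an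
  \<open>\<inter>\<close>-stable generator of \<open>\<sigma>(W)\<close>, so by Dynkin's theorem this is equivalent to
  \<open>E[X; A] = 0\<close> for all \<open>A \<in> \<sigma>(W)\<close>, which characterises \<open>E(X | W) = 0\<close>.
\<close>

lemma integrable_bounded_mult:
  fixes f Y :: "'a \<Rightarrow> real"
  assumes [measurable]: "f \<in> borel_measurable M" and "AE x in M. \<bar>f x\<bar> \<le> c"
    and "integrable M Y"
  shows "integrable M (\<lambda>x. f x * Y x)"
proof (rule Bochner_Integration.integrable_bound[where f="\<lambda>x. c * Y x"])
  show "integrable M (\<lambda>x. c * Y x)" using assms by auto
  show "(\<lambda>x. f x * Y x) \<in> borel_measurable M" using assms by measurable
  show "AE x in M. norm (f x * Y x) \<le> norm (c * Y x)"
    using assms(2) by eventually_elim (auto simp: abs_mult intro: mult_right_mono)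
qed

lemma EQ_eq_integral:
  assumes "integrable Q Y"
  shows "EQ Q Y = ereal (\<integral>x. Y x \<partial>Q)"
proof -
  obtain r s where "0 \<le> r" "0 \<le> s" "(\<integral>\<^sup>+x. ennreal (Y x) \<partial>Q) = ennreal r"
    "(\<integral>\<^sup>+x. ennreal (- Y x) \<partial>Q) = ennreal s" "(\<integral>x. Y x \<partial>Q) = r - s"
    using integrableE[OF assms] by metis
  then show ?thesis
    by (simp add: EQ_def enn2ereal_ennreal)
qed

definition Dlam_density :: "'a measure \<Rightarrow> real \<Rightarrow> ('a \<Rightarrow> real) \<Rightarrow> bool" where
  "Dlam_density M lam f \<longleftrightarrow> f \<in> borel_measurable M \<and> (\<forall>x\<in>space M. 0 \<le> f x)
     \<and> (AE x in M. f x \<le> 1 / lam) \<and> prob_space (density M (\<lambda>x. ennreal (f x)))"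

lemma Dlam_eq_densities: "Dlam M lam = {density M (\<lambda>x. ennreal (f x)) | f. Dlam_density M lam f}"
  unfolding Dlam_def Dlam_density_def by auto

context
  fixes M :: "'a measure" and lam :: real and f :: "'a \<Rightarrow> real"
  assumes f: "Dlam_density M lam f"
begin

lemma Dlam_density_integrable_mult:
  assumes "integrable M Y"
  shows "integrable M (\<lambda>x. f x * Y x)"
proof (rule integrable_bounded_mult[OF _ _ assms])
  show "f \<in> borel_measurable M" using f by (simp add: Dlam_density_def)
  have bound: "AE x in M. f x \<le> 1 / lam" and nn: "\<forall>x\<in>space M. 0 \<le> f x"
    using f by (auto simp: Dlam_density_def)
  show "AE x in M. \<bar>f x\<bar> \<le> 1 / lam"
    using bound AE_space by eventually_elim (use nn in auto)
qed

lemma EQ_Dlam_density: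
  assumes "integrable M Y"
  shows "EQ (density M (\<lambda>x. ennreal (f x))) Y = ereal (\<integral>x. f x * Y x \<partial>M)"
proof -
  have [measurable]: "f \<in> borel_measurable M" "Y \<in> borel_measurable M" and nn: "AE x in M. 0 \<le> f x"
    using f assms unfolding Dlam_density_def by auto
  have "integrable (density M (\<lambda>x. ennreal (f x))) Y"
    using Dlam_density_integrable_mult[OF assms] nn by (simp add: integrable_density)
  then show ?thesis
    using nn by (simp add: EQ_eq_integral integral_density)
qed

lemma nn_integral_Dlam_density: "(\<integral>\<^sup>+ x. ennreal (f x) \<partial>M) = 1"
proof -
  have "prob_space (density M (\<lambda>x. ennreal (f x)))" and [measurable]: "f \<in> borel_measurable M"
    using f unfolding Dlam_density_def by auto
  then have "emeasure (density M (\<lambda>x. ennreal (f x))) (space M) = 1"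
    using prob_space.emeasure_space_1 by fastforce
  then show ?thesis
    by (simp add: emeasure_density nn_integral_set_ennreal[symmetric])
qed

lemma Dlam_density_integrable: "integrable M f"
  and integral_Dlam_density: "(\<integral>x. f x \<partial>M) = 1"
  using nn_integral_eq_integrable[of f M 1] nn_integral_Dlam_density f
  by (auto simp: Dlam_density_def)

end

lemma u_lam_eq_minimum:
  assumes W: "integrable M W" and g: "Dlam_density M lam g"
    and min: "\<And>f. Dlam_density M lam f \<Longrightarrow> (\<integral>x. g x * W x \<partial>M) \<le> (\<integral>x. f x * W x \<partial>M)"
  shows "u_lam M lam W = ereal (\<integral>x. g x * W x \<partial>M)"
  unfolding u_lam_def Dlam_eq_densities
proof (rule antisym)
  show "(INF Q\<in>{density M (\<lambda>x. ennreal (f x)) |f. Dlam_density M lam f}. EQ Q W)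
      \<le> ereal (\<integral>x. g x * W x \<partial>M)"
    using g EQ_Dlam_density[OF g W] by (auto intro!: INF_lower2)
  show "ereal (\<integral>x. g x * W x \<partial>M)
      \<le> (INF Q\<in>{density M (\<lambda>x. ennreal (f x)) |f. Dlam_density M lam f}. EQ Q W)"
    using EQ_Dlam_density[OF _ W] min by (auto intro!: INF_greatest)
qed

lemma u_contrib_eq_unique_minimiser:
  assumes X: "integrable M X" and W: "integrable M W" and g: "Dlam_density M lam g"
    and min: "\<And>f. Dlam_density M lam f \<Longrightarrow> (\<integral>x. g x * W x \<partial>M) \<le> (\<integral>x. f x * W x \<partial>M)"
    and unique: "\<And>f. Dlam_density M lam f \<Longrightarrow>
      (\<integral>x. f x * W x \<partial>M) = (\<integral>x. g x * W x \<partial>M) \<Longrightarrow> AE x in M. f x = g x"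
  shows "u_contrib M lam X W = ereal (\<integral>x. g x * X x \<partial>M)"
proof -
  note u = u_lam_eq_minimum[OF W g min]
  have "EQ Q X = ereal (\<integral>x. g x * X x \<partial>M)" if "Q \<in> extreme_measures M lam W" for Q
  proof -
    have "Q \<in> Dlam M lam" and QW: "EQ Q W = u_lam M lam W"
      using that unfolding extreme_measures_def by auto
    then obtain f where f: "Dlam_density M lam f" and Q: "Q = density M (\<lambda>x. ennreal (f x))"
      unfolding Dlam_eq_densities by auto
    have "AE x in M. f x = g x"
      using QW f unique u EQ_Dlam_density[OF f W] unfolding Q by simp
    then have "(\<integral>x. f x * X x \<partial>M) = (\<integral>x. g x * X x \<partial>M)"
      using Dlam_density_integrable_mult[OF f X] Dlam_density_integrable_mult[OF g X]
      by (intro integral_cong_AE) auto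
    then show ?thesis
      using Q EQ_Dlam_density[OF f X] by simp
  qed
  moreover have "density M (\<lambda>x. ennreal (g x)) \<in> extreme_measures M lam W"
    using g u EQ_Dlam_density[OF g W] unfolding extreme_measures_def Dlam_eq_densities by auto
  ultimately show ?thesis
    unfolding u_contrib_def by (metis (no_types, lifting) INF_eq_const empty_iff)
qed

lemma Dlam_density_one_AE_eq_1:
  assumes "prob_space M" and f: "Dlam_density M 1 f"
  shows "AE x in M. f x = 1"
proof -
  interpret prob_space M by fact
  note fi = Dlam_density_integrable[OF f]
  have "(\<integral>x. 1 - f x \<partial>M) = 0"
    using fi integral_Dlam_density[OF f] by (simp add: prob_space)
  moreover have "AE x in M. 0 \<le> 1 - f x"
    using f unfolding Dlam_density_def by auto
  ultimately have "AE x in M. 1 - f x = 0"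
    using integral_nonneg_eq_0_iff_AE[of M "\<lambda>x. 1 - f x"] fi by auto
  then show ?thesis by eventually_elim simp
qed

lemma u_contrib_one:
  assumes M: "prob_space M" and X: "integrable M X" and W: "integrable M W"
  shows "u_contrib M 1 X W = ereal (\<integral>x. X x \<partial>M)"
proof -
  interpret prob_space M by fact
  have one: "Dlam_density M 1 (\<lambda>_. 1)"
    unfolding Dlam_density_def by (simp add: density_1 prob_space_axioms)
  have "(\<integral>x. f x * Y x \<partial>M) = (\<integral>x. Y x \<partial>M)"
    if f: "Dlam_density M 1 f" and Y: "integrable M Y" for f Y
    using Dlam_density_one_AE_eq_1[OF M f] Dlam_density_integrable_mult[OF f Y] Y
    by (subst integral_cong_AE[where g=Y]) (auto elim: AE_mp)
  then show ?thesis
    using u_contrib_eq_unique_minimiser[OF X W one] Dlam_density_one_AE_eq_1[OF M] W by simp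
qed

lemma Dlam_density_quantile:
  fixes W :: "'a \<Rightarrow> real"
  assumes "prob_space M" and [measurable]: "W \<in> borel_measurable M" and lam: "0 < lam"
    and q: "measure M {x\<in>space M. W x \<le> q} = lam"
  shows "Dlam_density M lam (\<lambda>x. indicator {x\<in>space M. W x \<le> q} x / lam)"
proof -
  interpret prob_space M by fact
  let ?A = "{x\<in>space M. W x \<le> q}"
  have [measurable]: "?A \<in> sets M" by measurable
  have "(\<integral>\<^sup>+x. ennreal (indicator ?A x / lam) \<partial>M) =
      (\<integral>\<^sup>+x. ennreal (1 / lam) * indicator ?A x \<partial>M)"
    by (intro nn_integral_cong) (simp add: indicator_def)
  also have "\<dots> = 1"
    using lam q by (subst nn_integral_cmult_indicator)
      (simp_all add: emeasure_eq_measure ennreal_mult[symmetric])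
  finally have "emeasure (density M (\<lambda>x. ennreal (indicator ?A x / lam))) (space M) = 1"
    by (simp add: emeasure_density nn_integral_set_ennreal[symmetric])
  then show ?thesis
    unfolding Dlam_density_def using lam by (auto intro!: prob_spaceI simp: indicator_def)
qed

lemma u_contrib_quantile:
  fixes X W :: "'a \<Rightarrow> real"
  assumes M: "prob_space M" and X: "integrable M X" and W: "integrable M W" and lam: "0 < lam"
    and q: "measure M {x\<in>space M. W x \<le> q} = lam"
    and no_atom: "measure M {x\<in>space M. W x = q} = 0"
  shows "u_contrib M lam X W = ereal ((LINT x:{x\<in>space M. W x \<le> q}|M. X x) / lam)"
proof -
  interpret prob_space M by fact
  have Wm[measurable]: "W \<in> borel_measurable M" using W by auto
  define g where "g x = indicator {x\<in>space M. W x \<le> q} x / lam" for x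
  have g: "Dlam_density M lam g"
    unfolding g_def by (rule Dlam_density_quantile[OF M Wm lam q])
  have W_ne_q: "AE x in M. W x \<noteq> q"
    using no_atom by (subst AE_iff_measurable[OF _ refl]) (auto simp: emeasure_eq_measure)
  \<comment> \<open>\<open>f \<le> 1/\<lambda> = g\<close> where \<open>W \<le> q\<close>, and \<open>f \<ge> 0 = g\<close> where \<open>W > q\<close>\<close>
  have nonneg: "AE x in M. 0 \<le> (f x - g x) * (W x - q)" if f: "Dlam_density M lam f" for f
  proof -
    have bound: "AE x in M. f x \<le> 1 / lam" and nn: "\<forall>x\<in>space M. 0 \<le> f x"
      using f unfolding Dlam_density_def by auto
    show ?thesis
      using bound AE_space
    proof eventually_elim
      case (elim x)
      then show ?case
        using nn by (cases "W x \<le> q") (auto simp: g_def zero_le_mult_iff)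
    qed
  qed
  have integral_diff:
      "(\<integral>x. (f x - g x) * (W x - q) \<partial>M) = (\<integral>x. f x * W x \<partial>M) - (\<integral>x. g x * W x \<partial>M)"
    and integrable_diff: "integrable M (\<lambda>x. (f x - g x) * (W x - q))"
    if f: "Dlam_density M lam f" for f
  proof -
    have "(\<lambda>x. (f x - g x) * (W x - q)) = (\<lambda>x. (f x * W x - g x * W x) - q * (f x - g x))"
      by (simp add: algebra_simps)
    then show
        "(\<integral>x. (f x - g x) * (W x - q) \<partial>M) = (\<integral>x. f x * W x \<partial>M) - (\<integral>x. g x * W x \<partial>M)"
      and "integrable M (\<lambda>x. (f x - g x) * (W x - q))"
      using Dlam_density_integrable_mult[OF f W] Dlam_density_integrable_mult[OF g W]
        Dlam_density_integrable[OF f] Dlam_density_integrable[OF g]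
        integral_Dlam_density[OF f] integral_Dlam_density[OF g]
      by simp_all
  qed
  have "u_contrib M lam X W = ereal (\<integral>x. g x * X x \<partial>M)"
  proof (rule u_contrib_eq_unique_minimiser[OF X W g])
    fix f assume f: "Dlam_density M lam f"
    show "(\<integral>x. g x * W x \<partial>M) \<le> (\<integral>x. f x * W x \<partial>M)"
      using integral_nonneg_AE[OF nonneg[OF f]] integral_diff[OF f] by simp
    assume "(\<integral>x. f x * W x \<partial>M) = (\<integral>x. g x * W x \<partial>M)"
    then have "AE x in M. (f x - g x) * (W x - q) = 0"
      using integral_nonneg_eq_0_iff_AE[OF integrable_diff[OF f] nonneg[OF f]] integral_diff[OF f]
      by simp
    then show "AE x in M. f x = g x"
      using W_ne_q by eventually_elim simp
  qed
  then show ?thesis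
    by (simp add: g_def set_lebesgue_integral_def)
qed

lemma atomless_exists_quantile:
  fixes W :: "'a \<Rightarrow> real"
  assumes "prob_space M" and [measurable]: "W \<in> borel_measurable M"
    and no_atom: "\<And>w. measure M {x\<in>space M. W x = w} = 0"
    and lam: "0 < lam" "lam < 1"
  shows "\<exists>q. measure M {x\<in>space M. W x \<le> q} = lam"
proof -
  interpret prob_space M by fact
  interpret D: real_distribution "distr M borel W"
    by (rule real_distribution_distr) simp
  have cdf_eq: "cdf (distr M borel W) t = measure M {x\<in>space M. W x \<le> t}" for t
    unfolding cdf_def by (subst measure_distr) (auto intro!: arg_cong[where f="measure M"])
  have "measure (distr M borel W) {t} = measure M {x\<in>space M. W x = t}" for t
    by (subst measure_distr) (auto intro!: arg_cong[where f="measure M"])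
  then have cont: "isCont (cdf (distr M borel W)) t" for t
    by (simp add: D.isCont_cdf no_atom)
  obtain a where a: "cdf (distr M borel W) a < lam"
    using order_tendstoD(2)[OF D.cdf_lim_at_bot lam(1)] by (auto simp: eventually_at_bot_linorder)
  obtain b where b: "a \<le> b" "lam < cdf (distr M borel W) b"
    using order_tendstoD(1)[OF D.cdf_lim_at_top_prob lam(2)]
    by (auto simp: eventually_at_top_linorder) (metis linear max.cobounded1 max.cobounded2)
  have "\<exists>t. a \<le> t \<and> t \<le> b \<and> cdf (distr M borel W) t = lam"
    using a b cont by (intro IVT') (auto intro: less_imp_le continuous_at_imp_continuous_on)
  then show ?thesis
    using cdf_eq by auto
qed

lemma u_contrib_eq_0_iff_set_integrals_atMost:
  fixes X W :: "'a \<Rightarrow> real"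
  assumes M: "prob_space M" and X: "integrable M X" and W: "integrable M W"
    and no_atom: "\<And>w. measure M {x\<in>space M. W x = w} = 0"
  shows "(\<forall>lam. 0 < lam \<and> lam \<le> 1 \<longrightarrow> u_contrib M lam X W = 0) \<longleftrightarrow>
    (\<integral>x. X x \<partial>M) = 0 \<and> (\<forall>q. (LINT x:{x\<in>space M. W x \<le> q}|M. X x) = 0)"
proof
  interpret prob_space M by fact
  assume all_lam: "\<forall>lam. 0 < lam \<and> lam \<le> 1 \<longrightarrow> u_contrib M lam X W = 0"
  show "(\<integral>x. X x \<partial>M) = 0 \<and> (\<forall>q. (LINT x:{x\<in>space M. W x \<le> q}|M. X x) = 0)"
  proof (intro conjI allI)
    show "(\<integral>x. X x \<partial>M) = 0"
      using all_lam u_contrib_one[OF M X W] by (simp add: zero_ereal_def)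
    fix q
    let ?A = "{x\<in>space M. W x \<le> q}"
    have [measurable]: "?A \<in> sets M" using W by measurable
    show "(LINT x:?A|M. X x) = 0"
    proof (cases "prob ?A = 0")
      case True
      then have "(LINT x:?A|M. X x) = (LINT x:{}|M. X x)"
        by (intro set_integral_null_delta X) (auto simp: null_sets_def emeasure_eq_measure)
      then show ?thesis by (simp add: set_lebesgue_integral_def)
    next
      case False
      then have "0 < prob ?A" "prob ?A \<le> 1"
        by (simp_all add: less_le)
      then show ?thesis
        using all_lam u_contrib_quantile[OF M X W _ refl no_atom] by (simp add: zero_ereal_def)
    qed
  qed
next
  assume zero: "(\<integral>x. X x \<partial>M) = 0 \<and> (\<forall>q. (LINT x:{x\<in>space M. W x \<le> q}|M. X x) = 0)"
  show "\<forall>lam. 0 < lam \<and> lam \<le> 1 \<longrightarrow> u_contrib M lam X W = 0"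
  proof (intro allI impI)
    fix lam :: real assume lam: "0 < lam \<and> lam \<le> 1"
    show "u_contrib M lam X W = 0"
    proof (cases "lam = 1")
      case True
      then show ?thesis
        using zero u_contrib_one[OF M X W] by (simp add: zero_ereal_def)
    next
      case False
      then obtain q where "measure M {x\<in>space M. W x \<le> q} = lam"
        using atomless_exists_quantile[OF M _ no_atom] lam W by force
      then show ?thesis
        using zero u_contrib_quantile[OF M X W _ _ no_atom] lam by (simp add: zero_ereal_def)
    qed
  qed
qed

lemma set_integral_eq_0_sigma_sets:
  fixes X :: "'a \<Rightarrow> real"
  assumes X: "integrable M X" and G: "Int_stable G" "G \<subseteq> sets M"
    and zero_on_G: "\<And>A. A \<in> G \<Longrightarrow> (LINT x:A|M. X x) = 0" and zero: "(\<integral>x. X x \<partial>M) = 0"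
    and A: "A \<in> sigma_sets (space M) G"
  shows "(LINT x:A|M. X x) = 0"
proof -
  have sets: "sigma_sets (space M) G \<subseteq> sets M"
    using G(2) by (rule sets.sigma_sets_subset)
  have set_integrable: "set_integrable M B X" if "B \<in> sets M" for B
    using integrable_mult_indicator[OF that X] by (simp add: set_integrable_def)
  have "G \<subseteq> Pow (space M)"
    using G(2) sets.sets_into_space by blast
  from G(1) this A show ?thesis
  proof (induction rule: sigma_sets_induct_disjoint)
    case (basic A)
    then show ?case by (rule zero_on_G)
  next
    case empty
    then show ?case by (simp add: set_lebesgue_integral_def)
  next
    case (compl A)
    then have "A \<in> sets M" using sets by auto
    then have "(LINT x:A \<union> (space M - A)|M. X x) = (LINT x:A|M. X x) + (LINT x:space M - A|M. X x)"
      by (intro set_integral_Un set_integrable) auto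
    moreover have "A \<union> (space M - A) = space M"
      using \<open>A \<in> sets M\<close> sets.sets_into_space by blast
    ultimately show ?case
      using compl.IH zero set_integral_space[OF X] by simp
  next
    case (union A)
    then have "range A \<subseteq> sets M" using sets by auto
    then have "(LINT x:(\<Union>i. A i)|M. X x) = (\<Sum>i. (LINT x:A i|M. X x))"
      using union.hyps(1) by (intro lebesgue_integral_countable_add set_integrable)
        (auto simp: disjoint_family_on_def)
    then show ?case
      using union.IH by simp
  qed
qed

lemma sets_vimage_algebra_borel_atMost:
  fixes W :: "'a \<Rightarrow> real"
  shows "sets (vimage_algebra (space M) W borel) =
    sigma_sets (space M) (range (\<lambda>q. {x\<in>space M. W x \<le> q}))"
proof -
  have "sets (vimage_algebra (space M) W borel) =
      sets (vimage_algebra (space M) W (sigma UNIV (range atMost)))"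
    by (rule sets_vimage_algebra_cong) (metis borel_eq_atMost)
  also have "\<dots> = sigma_sets (space M) {W -` A \<inter> space M | A. A \<in> range atMost}"
    by (subst vimage_algebra_sigma) (auto intro!: sets_measure_of)
  also have "{W -` A \<inter> space M | A. A \<in> range atMost} = range (\<lambda>q. {x\<in>space M. W x \<le> q})"
    by (auto intro!: exI[of _ "{.._}"])
  finally show ?thesis .
qed

lemma set_integral_vimage_algebra_eq_0_iff:
  fixes X W :: "'a \<Rightarrow> real"
  assumes X: "integrable M X" and [measurable]: "W \<in> borel_measurable M"
  shows "(\<forall>A\<in>sets (vimage_algebra (space M) W borel). (LINT x:A|M. X x) = 0) \<longleftrightarrow>
    (\<integral>x. X x \<partial>M) = 0 \<and> (\<forall>q. (LINT x:{x\<in>space M. W x \<le> q}|M. X x) = 0)"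
proof
  assume "\<forall>A\<in>sets (vimage_algebra (space M) W borel). (LINT x:A|M. X x) = 0"
  moreover have "space M \<in> sets (vimage_algebra (space M) W borel)"
    by (rule sets_vimage_algebra_space)
  moreover have "{x\<in>space M. W x \<le> q} \<in> sets (vimage_algebra (space M) W borel)" for q
    unfolding sets_vimage_algebra_borel_atMost by blast
  ultimately show "(\<integral>x. X x \<partial>M) = 0 \<and> (\<forall>q. (LINT x:{x\<in>space M. W x \<le> q}|M. X x) = 0)"
    using set_integral_space[OF X] by auto
next
  assume zero: "(\<integral>x. X x \<partial>M) = 0 \<and> (\<forall>q. (LINT x:{x\<in>space M. W x \<le> q}|M. X x) = 0)"
  have "Int_stable (range (\<lambda>q. {x\<in>space M. W x \<le> q}))"
  proof (rule Int_stableI)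
    fix A B
    assume "A \<in> range (\<lambda>q. {x\<in>space M. W x \<le> q})" "B \<in> range (\<lambda>q. {x\<in>space M. W x \<le> q})"
    then obtain a b where "A = {x\<in>space M. W x \<le> a}" "B = {x\<in>space M. W x \<le> b}" by blast
    then have "A \<inter> B = {x\<in>space M. W x \<le> min a b}" by auto
    then show "A \<inter> B \<in> range (\<lambda>q. {x\<in>space M. W x \<le> q})" by blast
  qed
  then show "\<forall>A\<in>sets (vimage_algebra (space M) W borel). (LINT x:A|M. X x) = 0"
    unfolding sets_vimage_algebra_borel_atMost
    using zero by (auto intro: set_integral_eq_0_sigma_sets[OF X])
qed

lemma (in sigma_finite_subalgebra) AE_real_cond_exp_eq_0_iff:
  fixes X :: "'a \<Rightarrow> real"
  assumes X: "integrable M X"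
  shows "(AE x in M. real_cond_exp M F X x = 0) \<longleftrightarrow> (\<forall>A\<in>sets F. (LINT x:A|M. X x) = 0)"
proof
  assume AE_0: "AE x in M. real_cond_exp M F X x = 0"
  show "\<forall>A\<in>sets F. (LINT x:A|M. X x) = 0"
  proof
    fix A assume "A \<in> sets F"
    then have "(LINT x:A|M. X x) = (LINT x:A|M. real_cond_exp M F X x)"
      by (rule real_cond_exp_intA[OF X])
    also have "\<dots> = 0"
      unfolding set_lebesgue_integral_def
      by (rule integral_eq_zero_AE) (use AE_0 in \<open>eventually_elim, simp\<close>)
    finally show "(LINT x:A|M. X x) = 0" .
  qed
next
  assume "\<forall>A\<in>sets F. (LINT x:A|M. X x) = 0"
  then show "AE x in M. real_cond_exp M F X x = 0"
    by (intro real_cond_exp_charact X) (auto simp: set_lebesgue_integral_def)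
qed

lemma sigma_finite_subalgebra_vimage_algebra:
  assumes "prob_space M" and "W \<in> M \<rightarrow>\<^sub>M N"
  shows "sigma_finite_subalgebra M (vimage_algebra (space M) W N)"
proof (rule finite_measure_subalgebra_is_sigma_finite)
  have "subalgebra M (vimage_algebra (space M) W N)"
    using assms(2) by (simp add: subalgebra_def measurable_iff_sets)
  then show "finite_measure_subalgebra M (vimage_algebra (space M) W N)"
    using assms(1) by (simp add: finite_measure_subalgebra_def finite_measure_subalgebra_axioms_def
        prob_space.finite_measure)
qed

theorem proposition5p9:
  fixes M :: "'a measure" and X W :: "'a \<Rightarrow> real"
  assumes "prob_space M"
    and "integrable M X" and "integrable M W"
    and "\<And>w. measure M {x \<in> space M. W x = w} = 0"
  shows "(\<forall>lam. 0 < lam \<and> lam \<le> 1 \<longrightarrow> u_contrib M lam X W = 0) \<longleftrightarrow>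
         (AE x in M. real_cond_exp M (vimage_algebra (space M) W borel) X x = 0)"
proof -
  have W: "W \<in> borel_measurable M"
    using assms(3) by auto
  interpret sigma_finite_subalgebra M "vimage_algebra (space M) W borel"
    using assms(1) W by (rule sigma_finite_subalgebra_vimage_algebra)
  show ?thesis
    by (simp only: u_contrib_eq_0_iff_set_integrals_atMost[OF assms]
        AE_real_cond_exp_eq_0_iff[OF assms(2)] set_integral_vimage_algebra_eq_0_iff[OF assms(2) W])
qed

end
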